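(* Let $f$ be a Lipschitz function on $\mathcal{X}$ and run the ECP algorithm on $f$. Let $(x_i)_{1\le i\le t}$ be the points evaluated by ECP up to time $t$, and let $v_t$ be the number of times the growth condition has been validated (i.e. $\varepsilon_t$ has been multiplied by $\tau_{n,d}$ due to the growth condition) during iteration $t$. For a candidate $x\in\mathcal{X}$ drawn uniformly at random from $\mathcal{X}$ while seeking $x_{t+1}$, let $R(x,t+1,v_t)$ be the event that $x$ is rejected by the acceptance condition after these $v_t$ growths. Then $$\mathbb{P}\big(R(x,t+1,v_t)\big)\le\frac{t\,(\sqrt{\pi}\,\Delta)^d}{\varepsilon_1^d\,\tau_{n,d}^{(t-1)d}\,\tau_{n,d}^{v_t d}\,\Gamma(d/2+1)\,\lambda(\mathcal{X})}.$$
   Context: Setting: $\mathcal{X}\subset\mathbb{R}^d$ is convex, compact with non-empty interior; $f:\mathcal{X}\to\mathbb{R}$ is Lipschitz. $\Delta=\max_{x\in\mathcal{X}}f(x)-\min_{x\in\mathcal{X}}f(x)$, $\lambda$ is Lebesgue measure, $\Gamma(x)=\int_0^\infty s^{x-1}e^{-s}\,ds$. For evaluated points $x_1,\dots,x_t$ and $\varepsilon>0$, $\mathcal{A}_{\varepsilon,t}=\{x\in\mathcal{X}: \min_{i\le t}(f(x_i)+\varepsilon\|x-x_i\|_2)\ge\max_{j\le t}f(x_j)\}$. ECP algorithm. Inputs: budget $n\in\mathbb{N}^\star$, $\varepsilon_1>0$, a coefficient $\tau_{n,d}>1$ (a non-decreasing function of $n$ and $d$), a constant $C>1$. Draw $x_1\sim\mathcal{U}(\mathcal{X})$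 and evaluate $f(x_1)$; set $t=1$, $h_1=1$, $h_2=0$. While $t<n$: draw a fresh candidate $x_{t+1}\sim\mathcal{U}(\mathcal{X})$ and set $h_{t+1}\leftarrow h_{t+1}+1$; if $h_{t+1}-h_t>C$ (growth condition), set $\varepsilon_t\leftarrow\tau_{n,d}\varepsilon_t$ and $h_{t+1}\leftarrow0$; if $x_{t+1}\in\mathcal{A}_{\varepsilon_t,t}$ (acceptance condition), evaluate $f(x_{t+1})$, set $t\leftarrow t+1$, then $h_t\leftarrow h_{t+1}$ (the counter of the round just finished), $\varepsilon_{t+1}\leftarrow\tau_{n,d}\varepsilon_t$, $h_{t+1}\leftarrow0$. Output $x_{\hat i}$ with $\hat i\in\arg\max_{i\le n}f(x_i)$. "Iteration $t$" is the phase in which the algorithm seeks $x_{t+1}$, with current parameter $\varepsilon_t$. *)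

theory Defs
  imports "HOL-Analysis.Analysis" "HOL-Probability.Probability"
begin

definition ecp_accept :: "('a::euclidean_space \<Rightarrow> real) \<Rightarrow> 'a set \<Rightarrow> (nat \<Rightarrow> 'a) \<Rightarrow> nat \<Rightarrow> real \<Rightarrow> 'a set" where
  "ecp_accept f X xs t eps =
     {x \<in> X. Min ((\<lambda>i. f (xs i) + eps * norm (x - xs i)) ` {1..t}) \<ge> Max ((\<lambda>j. f (xs j)) ` {1..t})}"

definition ecp_reject :: "('a::euclidean_space \<Rightarrow> real) \<Rightarrow> 'a set \<Rightarrow> (nat \<Rightarrow> 'a) \<Rightarrow> nat \<Rightarrow> real \<Rightarrow> 'a set" where
  "ecp_reject f X xs t eps = X - ecp_accept f X xs t eps"

end

theory Submission
  imports Defs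
begin

(* A candidate x is rejected only if f (xs i) + eps * |x - xs i| < f (xs j) for some i, j;
   as f (xs j) - f (xs i) is at most the range Delta of f, x then lies within distance Delta / eps
   of some evaluated point. So the rejection region is covered by t balls of radius Delta / eps,
   whose total volume t * unit_ball_vol d * (Delta / eps)^d, divided by the volume of X, bounds
   the probability. Since the acceptance region only grows with eps, the extra growth factors
   tau ^ g may be dropped. *)

lemma diff_le_SUP_minus_INF:
  fixes f :: "'a \<Rightarrow> real"
  assumes "bounded (f ` X)" and "x \<in> X" and "y \<in> X"
  shows "f x - f y \<le> (SUP z\<in>X. f z) - (INF z\<in>X. f z)"
proof -
  have "f x \<le> (SUP z\<in>X. f z)" and "(INF z\<in>X. f z) \<le> f y"
    using assms by (auto intro: cSUP_upper cINF_lower bounded_imp_bdd_above bounded_imp_bdd_below)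
  then show ?thesis by linarith
qed

lemma unit_ball_vol_mult_power:
  "unit_ball_vol (real d) * r ^ d = (sqrt pi * r) ^ d / Gamma (real d / 2 + 1)"
proof -
  have "sqrt pi ^ d = pi powr (real d / 2)"
    by (simp add: sqrt_def powr_realpow[symmetric] root_powr_inverse powr_powr)
  then show ?thesis by (simp add: unit_ball_vol_def power_mult_distrib)
qed

lemma measure_UN_ball_le:
  fixes c :: "'i \<Rightarrow> 'a::euclidean_space"
  assumes "finite I" and "r \<ge> 0"
  shows "measure lborel (\<Union>i\<in>I. ball (c i) r) \<le> card I * (unit_ball_vol DIM('a) * r ^ DIM('a))"
proof -
  have "measure lborel (\<Union>i\<in>I. ball (c i) r) \<le> (\<Sum>i\<in>I. measure lborel (ball (c i) r))"
    using assms(1) by (intro measure_UNION_le) auto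
  also have "\<dots> = card I * (unit_ball_vol DIM('a) * r ^ DIM('a))"
    using assms(2) by (simp add: content_ball)
  finally show ?thesis .
qed

lemma measure_lborel_pos_if_interior_nonempty:
  assumes "X \<in> fmeasurable lborel" and "interior X \<noteq> {}"
  shows "measure lborel X > 0"
proof -
  obtain c e where "e > 0" and "ball c e \<subseteq> X"
    using assms(2) by (meson all_not_in_conv mem_interior)
  then have "0 < measure lborel (ball c e)" and "measure lborel (ball c e) \<le> measure lborel X"
    using assms(1) by (auto intro!: content_ball_pos measure_mono_fmeasurable)
  then show ?thesis by linarith
qed

lemma measure_uniform_measure_le_if_subset:
  assumes "X \<in> fmeasurable M" and "measure M X > 0"
    and "U \<in> fmeasurable M" and "R \<subseteq> U"
  shows "measure (uniform_measure M X) R \<le> measure M U / measure M X"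
proof (cases "R \<in> sets M")
  case True
  have "emeasure M X \<noteq> 0" and "emeasure M X \<noteq> \<infinity>"
    using assms(1,2) by (auto simp: fmeasurable_def measure_def)
  with True have "measure (uniform_measure M X) R = measure M (X \<inter> R) / measure M X"
    by simp
  also have "\<dots> \<le> measure M U / measure M X"
    using True assms by (intro divide_right_mono measure_mono_fmeasurable) auto
  finally show ?thesis .
next
  case False
  then show ?thesis using assms(2) by (simp add: measure_notin_sets)
qed

lemma measure_uniform_measure_le_UN_ball:
  fixes c :: "'i \<Rightarrow> 'a::euclidean_space"
  assumes "compact X" and "interior X \<noteq> {}"
    and "finite I" and "r \<ge> 0" and "R \<subseteq> (\<Union>i\<in>I. ball (c i) r)"
  shows "measure (uniform_measure lborel X) R
    \<le> card I * (unit_ball_vol DIM('a) * r ^ DIM('a)) / measure lborel X"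
proof -
  have "X \<in> fmeasurable lborel"
    using assms(1) by (rule fmeasurable_compact)
  moreover from this have "measure lborel X > 0"
    using assms(2) by (rule measure_lborel_pos_if_interior_nonempty)
  moreover have "(\<Union>i\<in>I. ball (c i) r) \<in> fmeasurable lborel"
    using assms(3) by (intro fmeasurableI emeasure_bounded_finite) auto
  ultimately have "measure (uniform_measure lborel X) R
      \<le> measure lborel (\<Union>i\<in>I. ball (c i) r) / measure lborel X"
    using assms(5) by (rule measure_uniform_measure_le_if_subset)
  also have "\<dots> \<le> card I * (unit_ball_vol DIM('a) * r ^ DIM('a)) / measure lborel X"
    using measure_UN_ball_le[OF assms(3,4), of c] \<open>measure lborel X > 0\<close>
    by (intro divide_right_mono) auto
  finally show ?thesis .
qed

lemma ecp_accept_iff: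
  assumes "t \<ge> 1"
  shows "x \<in> ecp_accept f X xs t eps \<longleftrightarrow>
    x \<in> X \<and> (\<forall>i\<in>{1..t}. \<forall>j\<in>{1..t}. f (xs j) \<le> f (xs i) + eps * norm (x - xs i))"
  using assms by (auto simp: ecp_accept_def Min_ge_iff Max_le_iff)

lemma ecp_reject_iff:
  assumes "t \<ge> 1"
  shows "x \<in> ecp_reject f X xs t eps \<longleftrightarrow>
    x \<in> X \<and> (\<exists>i\<in>{1..t}. \<exists>j\<in>{1..t}. f (xs i) + eps * norm (x - xs i) < f (xs j))"
  by (auto simp: ecp_reject_def ecp_accept_iff[OF assms] not_le)

lemma ecp_reject_antimono:
  assumes "t \<ge> 1" and "eps \<le> eps'"
  shows "ecp_reject f X xs t eps' \<subseteq> ecp_reject f X xs t eps"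
proof
  fix x assume "x \<in> ecp_reject f X xs t eps'"
  then obtain i j where ij: "x \<in> X" "i \<in> {1..t}" "j \<in> {1..t}"
    and "f (xs i) + eps' * norm (x - xs i) < f (xs j)"
    using assms(1) by (auto simp: ecp_reject_iff)
  moreover have "eps * norm (x - xs i) \<le> eps' * norm (x - xs i)"
    using assms(2) by (simp add: mult_right_mono)
  ultimately have "f (xs i) + eps * norm (x - xs i) < f (xs j)"
    by linarith
  with ij show "x \<in> ecp_reject f X xs t eps"
    unfolding ecp_reject_iff[OF assms(1)] by blast
qed

lemma ecp_reject_subset_balls:
  assumes "t \<ge> 1" and "eps > 0"
    and "\<forall>i\<in>{1..t}. \<forall>j\<in>{1..t}. f (xs j) - f (xs i) \<le> D"
  shows "ecp_reject f X xs t eps \<subseteq> (\<Union>i\<in>{1..t}. ball (xs i) (D / eps))"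
proof
  fix x assume "x \<in> ecp_reject f X xs t eps"
  then obtain i j where ij: "i \<in> {1..t}" "j \<in> {1..t}"
    and "f (xs i) + eps * norm (x - xs i) < f (xs j)"
    using assms(1) by (auto simp: ecp_reject_iff)
  then have "eps * norm (x - xs i) < D"
    using assms(3) by fastforce
  then have "dist (xs i) x < D / eps"
    using assms(2) by (simp add: dist_norm norm_minus_commute pos_less_divide_eq mult.commute)
  with ij show "x \<in> (\<Union>i\<in>{1..t}. ball (xs i) (D / eps))" by auto
qed

theorem proposition4:
  fixes f :: "'a::euclidean_space \<Rightarrow> real"
    and X :: "'a set"
    and xs :: "nat \<Rightarrow> 'a"
    and t n g v :: nat
    and eps1 tau :: real
  assumes "convex X" and "compact X" and "interior X \<noteq> {}"
    and "\<exists>L. L-lipschitz_on X f"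
    and "eps1 > 0" and "tau > 1"
    and "1 \<le> t" and "t < n"
    and "\<forall>i\<in>{1..t}. xs i \<in> X"
  shows "measure (uniform_measure lborel X)
           (ecp_reject f X xs t (eps1 * tau ^ (t - 1 + g + v)))
         \<le> real t * (sqrt pi * ((SUP x\<in>X. f x) - (INF x\<in>X. f x))) ^ DIM('a)
           / (eps1 ^ DIM('a) * tau ^ ((t - 1) * DIM('a)) * tau ^ (v * DIM('a))
              * Gamma (real DIM('a) / 2 + 1) * measure lborel X)"
proof -
  define D where "D = (SUP x\<in>X. f x) - (INF x\<in>X. f x)"
  define eps where "eps = eps1 * tau ^ (t - 1) * tau ^ v"
  have "bounded (f ` X)"
    using assms(2,4) lipschitz_on_continuous_on
    by (metis compact_continuous_image compact_imp_bounded)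
  then have range: "\<forall>i\<in>{1..t}. \<forall>j\<in>{1..t}. f (xs j) - f (xs i) \<le> D"
    using assms(9) unfolding D_def by (auto intro: diff_le_SUP_minus_INF)
  have "D \<ge> 0" using range[rule_format, of 1 1] assms(7) by simp
  have "eps > 0" using assms(5,6) by (simp add: eps_def)
  have "eps \<le> eps1 * tau ^ (t - 1 + g + v)"
    using assms(5,6) by (simp add: eps_def power_add mult.assoc)
  then have "ecp_reject f X xs t (eps1 * tau ^ (t - 1 + g + v)) \<subseteq> ecp_reject f X xs t eps"
    by (rule ecp_reject_antimono[OF assms(7)])
  also have "\<dots> \<subseteq> (\<Union>i\<in>{1..t}. ball (xs i) (D / eps))"
    using assms(7) \<open>eps > 0\<close> range by (rule ecp_reject_subset_balls)
  finally have cover: "ecp_reject f X xs t (eps1 * tau ^ (t - 1 + g + v))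
      \<subseteq> (\<Union>i\<in>{1..t}. ball (xs i) (D / eps))" .
  have "D / eps \<ge> 0" using \<open>D \<ge> 0\<close> \<open>eps > 0\<close> by simp
  from measure_uniform_measure_le_UN_ball[OF assms(2,3) finite_atLeastAtMost this cover]
  have "measure (uniform_measure lborel X) (ecp_reject f X xs t (eps1 * tau ^ (t - 1 + g + v)))
      \<le> real t * (unit_ball_vol DIM('a) * (D / eps) ^ DIM('a)) / measure lborel X"
    by simp
  also have "\<dots> = real t * (sqrt pi * D) ^ DIM('a)
      / (eps1 ^ DIM('a) * tau ^ ((t - 1) * DIM('a)) * tau ^ (v * DIM('a))
         * Gamma (real DIM('a) / 2 + 1) * measure lborel X)"
    by (simp add: unit_ball_vol_mult_power eps_def power_mult_distrib power_divide
        power_mult[symmetric] mult.commute)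
  finally show ?thesis unfolding D_def .
qed

end
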